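(* Let $a,b,c$ be positive numbers with $a<b<c$ and $b-a<c_0<a$, where $c_0=c-\lfloor c/b\rfloor b$. Then $$\mathcal D_{a,b,c}=\Big(\mathcal S_{a,b,c}\cap([0,c_0+a-b)+a\mathbb Z)\cap(\mathcal S_{a,b,c}-\lfloor c/b\rfloor b)\Big)\cup\Big(\mathcal S_{a,b,c}\cap\bigcup_{\lambda\in b\mathbb Z\cap[b,(\lfloor c/b\rfloor-1)b]}(\mathcal S_{a,b,c}-\lambda)\Big).$$
   Context: For $a,b,c>0$ and $t\in\mathbb R$, $\mathbf M_{a,b,c}(t)=(\chi_{[0,c)}(t-\mu+\lambda))_{\mu\in a\mathbb Z,\lambda\in b\mathbb Z}$ is the infinite matrix with rows indexed by $a\mathbb Z$ and columns by $b\mathbb Z$, acting by $(\mathbf M_{a,b,c}(t)\mathbf x)(\mu)=\sum_{\lambda\in b\mathbb Z}\chi_{[0,c)}(t-\mu+\lambda)\mathbf x(\lambda)$. $\mathcal B_b$ is the set of vectors $(\mathbf x(\lambda))_{\lambda\in b\mathbb Z}$ with entries in $\{0,1\}$, and $\mathcal B_b^0=\{\mathbf x\in\mathcal B_b:\mathbf x(0)=1\}$. $\mathbf 1,\mathbf 2$ denote the vectors indexed by $a\mathbb Z$ with all entries $1$, resp. $2$. $\mathcal D_{a,b,c}=\{t:\mathbf M_{a,b,c}(t)\mathbf x=\mathbf 2\text{ for some }\mathbf x\in\mathcal B_b^0\}$, $\mathcal S_{a,b,c}=\{t:\mathbf M_{a,b,c}(t)\mathbf x=\mathbf 1\text{ for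 some }\mathbf x\in\mathcal B_b^0\}$. For $A\subset\mathbb R$, $A-r=\{x-r:x\in A\}$ and $A+a\mathbb Z=\{x+ak:x\in A,k\in\mathbb Z\}$. *)

theory Defs
  imports "HOL-Analysis.Analysis"
begin

text \<open>Rows of M_{a,b,c}(t) are indexed by mu = a*k (k integer), columns by lambda = b*j.
  A vector indexed by bZ is a function int => real (entry at lambda = b*j is x j).
  The (M x)(mu) sum is over all lambda; only the finitely many lambda with
  t - mu + lambda in [0,c) contribute, so we sum over exactly those.\<close>

definition Mmul :: "real \<Rightarrow> real \<Rightarrow> real \<Rightarrow> real \<Rightarrow> (int \<Rightarrow> real) \<Rightarrow> int \<Rightarrow> real" where
  "Mmul a b c t x k =
     (\<Sum>j\<in>{j::int. 0 \<le> t - a * of_int k + b * of_int j \<and> t - a * of_int k + b * of_int j < c}.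
        indicator {0..<c} (t - a * of_int k + b * of_int j) * x j)"

definition Bb0 :: "(int \<Rightarrow> real) set" where
  "Bb0 = {x. (\<forall>j. x j \<in> {0, 1}) \<and> x 0 = 1}"

definition Dset :: "real \<Rightarrow> real \<Rightarrow> real \<Rightarrow> real set" where
  "Dset a b c = {t. \<exists>x\<in>Bb0. \<forall>k. Mmul a b c t x k = 2}"

definition Sset :: "real \<Rightarrow> real \<Rightarrow> real \<Rightarrow> real set" where
  "Sset a b c = {t. \<exists>x\<in>Bb0. \<forall>k. Mmul a b c t x k = 1}"

definition shift_set :: "real set \<Rightarrow> real \<Rightarrow> real set" where
  "shift_set A r = (\<lambda>x. x - r) ` A"

definition plus_aZ :: "real set \<Rightarrow> real \<Rightarrow> real set" where
  "plus_aZ A a = {x + a * of_int k | x k. x \<in> A}"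

end

theory Submission
  imports Defs
begin

text \<open>
  Identify a 0-1 vector indexed by \<open>b\<int>\<close> with its support \<open>Y \<subseteq> \<int>\<close>. Row \<open>k\<close> of \<open>M(t)\<close> has
  its ones on the integer interval \<open>{j. 0 \<le> t - ak + bj < c}\<close>, and since \<open>a \<le> b \<le> c\<close> every column is the first entry of some row and the last
  entry of another. Hence a solution of \<open>M(t)y = 1\<close> is determined by any one of its
  elements, two such solutions through different columns of a common row are disjoint and
  their union solves \<open>M(t)x = 2\<close>; conversely a solution of \<open>M(t)x = 2\<close> splits into two
  solutions of \<open>M(t)y = 1\<close> according to the parity of the position of its elements.
  Thus \<open>t \<in> D\<close> iff \<open>t \<in> S\<close> and \<open>t + bj \<in> S\<close> for some \<open>j \<noteq> 0\<close> sharing a row with column 0.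
  Examining the row \<open>\<lfloor>t/a\<rfloor>\<close>, whose first column is 0, together with the next row
  pins down \<open>j \<in> {1, \<dots>, \<lfloor>c/b\<rfloor>}\<close>, where \<open>j = \<lfloor>c/b\<rfloor>\<close> is possible only if
  \<open>t - a\<lfloor>t/a\<rfloor> < c\<^sub>0 + a - b\<close>.
\<close>

lemma uminus_image_iff: "x \<in> uminus ` A \<longleftrightarrow> - x \<in> (A :: 'a::group_add set)"
  by (metis image_iff minus_minus)

lemma card_2_obtain_less:
  fixes S :: "'a::linorder set"
  assumes "card S = 2"
  obtains u v where "S = {u, v}" "u < v"
proof -
  obtain x y where "S = {x, y}" "x \<noteq> y" using assms unfolding card_2_iff by blast
  moreover have "{x, y} = {y, x}" by blast
  ultimately show thesis using that[of x y] that[of y x] by (cases "x < y") auto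
qed

lemma remainder_floor_divide_bounds:
  fixes a x :: real
  assumes "0 < a"
  shows "0 \<le> x - a * of_int \<lfloor>x / a\<rfloor>" "x - a * of_int \<lfloor>x / a\<rfloor> < a"
  using floor_divide_lower[OF assms, of x] floor_divide_upper[OF assms, of x]
  by (simp_all add: algebra_simps)

definition meets_exactly :: "(int \<Rightarrow> int set) \<Rightarrow> nat \<Rightarrow> int set \<Rightarrow> bool" where
  "meets_exactly W n Y \<longleftrightarrow> (\<forall>k. card (W k \<inter> Y) = n)"

lemma meets_exactly_reflect:
  "meets_exactly (\<lambda>k. uminus ` W k) n (uminus ` Y) \<longleftrightarrow> meets_exactly W n Y"
proof -
  have "card (uminus ` W k \<inter> uminus ` Y) = card (W k \<inter> Y)" for k :: int
    by (simp add: image_Int[symmetric] card_image)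
  then show ?thesis by (simp add: meets_exactly_def)
qed

definition signed_count :: "int set \<Rightarrow> int \<Rightarrow> int" where
  "signed_count X x = int (card (X \<inter> {0..<x})) - int (card (X \<inter> {x..<0}))"

lemma signed_count_plus_one:
  "signed_count X (x + 1) = signed_count X x + (if x \<in> X then 1 else 0)"
proof (cases "0 \<le> x")
  case True
  then have "{0..<x+1} = insert x {0..<x}" "{x+1..<0} = {}" "{x..<0} = {}" by auto
  then show ?thesis by (simp add: signed_count_def Int_insert_right)
next
  case False
  then have "{0..<x+1} = {}" "{0..<x} = {}" "{x..<0} = insert x {x+1..<0}" by auto
  then show ?thesis by (simp add: signed_count_def Int_insert_right)
qed

lemma signed_count_diff:
  "u \<le> v \<Longrightarrow> signed_count X v - signed_count X u = int (card (X \<inter> {u..<v}))"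
proof (induction v rule: int_ge_induct)
  case (step v)
  then have "{u..<v+1} = insert v {u..<v}" by auto
  with step.IH show ?case by (simp add: signed_count_plus_one Int_insert_right)
qed simp

locale interval_rows =
  fixes W :: "int \<Rightarrow> int set"
  assumes finite_row: "finite (W k)"
    and row_convex: "i \<in> W k \<Longrightarrow> l \<in> W k \<Longrightarrow> i \<le> j \<Longrightarrow> j \<le> l \<Longrightarrow> j \<in> W k"
    and ex_row_starting_at: "\<exists>k. i \<in> W k \<and> (\<forall>j\<in>W k. i \<le> j)"
    and ex_row_ending_at: "\<exists>k. i \<in> W k \<and> (\<forall>j\<in>W k. j \<le> i)"
begin

lemma interval_rows_reflect: "interval_rows (\<lambda>k. uminus ` W k)"
proof
  show "finite (uminus ` W k)" for k using finite_row by simp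
  show "j \<in> uminus ` W k"
    if "i \<in> uminus ` W k" "l \<in> uminus ` W k" "i \<le> j" "j \<le> l" for i j l k
    using that row_convex[of "-l" k "-i" "-j"] by (simp add: uminus_image_iff)
  show "\<exists>k. i \<in> uminus ` W k \<and> (\<forall>j\<in>uminus ` W k. i \<le> j)" for i
    using ex_row_ending_at[of "-i"] by (auto simp: uminus_image_iff le_minus_iff)
  show "\<exists>k. i \<in> uminus ` W k \<and> (\<forall>j\<in>uminus ` W k. j \<le> i)" for i
    using ex_row_starting_at[of "-i"] by (auto simp: uminus_image_iff minus_le_iff)
qed

lemma meets_one_agree_above:
  assumes Y: "meets_exactly W 1 Y" and Z: "meets_exactly W 1 Z"
    and p: "p \<in> Y" "p \<in> Z"
  shows "p < i \<Longrightarrow> i \<in> Y \<longleftrightarrow> i \<in> Z"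
proof (induction "nat (i - p)" arbitrary: i rule: less_induct)
  case less
  obtain k where k: "i \<in> W k" "\<forall>j\<in>W k. j \<le> i" using ex_row_ending_at by blast
  obtain y where y: "W k \<inter> Y = {y}"
    using Y card_1_singletonE unfolding meets_exactly_def by blast
  obtain z where z: "W k \<inter> Z = {z}"
    using Z card_1_singletonE unfolding meets_exactly_def by blast
  show ?case
  proof (cases "p \<in> W k")
    case True
    then have "y = p" "z = p" using y z p by auto
    then show ?thesis using y z k(1) less.prems by auto
  next
    case False
    have above_p: "p < w" if "w \<in> W k" for w
    proof (rule ccontr)
      assume "\<not> p < w"
      then have "p \<in> W k" using row_convex[OF that k(1), of p] less.prems by simp
      with False show False ..
    qed
    have agree_below_i: "w \<in> Y \<longleftrightarrow> w \<in> Z" if "w \<in> W k" "w < i" for w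
    proof -
      have "nat (w - p) < nat (i - p)" using above_p[OF that(1)] that(2) by simp
      then show ?thesis using less.hyps above_p[OF that(1)] by blast
    qed
    have "y \<in> W k" "y \<in> Y" "z \<in> W k" "z \<in> Z" using y z by auto
    then have "y = z"
      using agree_below_i[of y] agree_below_i[of z] y z k(2) by (metis IntI order_less_le singletonD)
    moreover have "i \<in> Y \<longleftrightarrow> i = y" "i \<in> Z \<longleftrightarrow> i = z" using y z k(1) by auto
    ultimately show ?thesis by simp
  qed
qed

lemma meets_one_eq:
  assumes Y: "meets_exactly W 1 Y" and Z: "meets_exactly W 1 Z"
    and p: "p \<in> Y" "p \<in> Z"
  shows "Y = Z"
proof -
  have below: "i \<in> Y \<longleftrightarrow> i \<in> Z" if "i < p" for i
  proof -
    have "meets_exactly (\<lambda>k. uminus ` W k) 1 (uminus ` Y)"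
      "meets_exactly (\<lambda>k. uminus ` W k) 1 (uminus ` Z)"
      using Y Z by (simp_all add: meets_exactly_reflect)
    moreover have "-p \<in> uminus ` Y" "-p \<in> uminus ` Z" "-p < -i"
      using p that by (simp_all add: uminus_image_iff)
    ultimately have "-i \<in> uminus ` Y \<longleftrightarrow> -i \<in> uminus ` Z"
      by (rule interval_rows.meets_one_agree_above[OF interval_rows_reflect])
    then show ?thesis by (simp add: uminus_image_iff)
  qed
  have "i \<in> Y \<longleftrightarrow> i \<in> Z" for i
    using meets_one_agree_above[OF Y Z p, of i] below[of i] p by (cases i p rule: linorder_cases) auto
  then show ?thesis by blast
qed

lemma meets_one_disjoint:
  assumes Y: "meets_exactly W 1 Y" and Z: "meets_exactly W 1 Z"
    and "p \<in> Y" "q \<in> Z" "p \<noteq> q" "p \<in> W k" "q \<in> W k"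
  shows "Y \<inter> Z = {}"
proof (rule ccontr)
  assume "Y \<inter> Z \<noteq> {}"
  then have "Y = Z" using meets_one_eq[OF Y Z] by blast
  then have "{p, q} \<subseteq> W k \<inter> Y" using assms by blast
  then have "card {p, q} \<le> card (W k \<inter> Y)"
    by (intro card_mono) (simp_all add: finite_row)
  then have "2 \<le> card (W k \<inter> Y)" using \<open>p \<noteq> q\<close> by simp
  then show False using Y by (simp add: meets_exactly_def)
qed

lemma meets_one_Un:
  assumes "meets_exactly W 1 Y" "meets_exactly W 1 Z" "Y \<inter> Z = {}"
  shows "meets_exactly W 2 (Y \<union> Z)"
proof -
  have "card (W k \<inter> (Y \<union> Z)) = card (W k \<inter> Y) + card (W k \<inter> Z)" for k
    using assms(3) finite_row[of k] by (subst card_Un_disjoint[symmetric]) (auto simp: Int_Un_distrib)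
  then show ?thesis using assms by (simp add: meets_exactly_def)
qed

lemma signed_count_row_pair:
  assumes uv: "W k \<inter> X = {u, v}" "u < v"
  shows "signed_count X v = signed_count X u + 1"
proof -
  have "x = u" if "x \<in> X" "u \<le> x" "x < v" for x
  proof -
    have "u \<in> W k" "v \<in> W k" using uv(1) by blast+
    then have "x \<in> W k \<inter> X" using row_convex[of u k v x] that by simp
    then show ?thesis using uv(1) that(3) by blast
  qed
  moreover have "u \<in> X" using uv(1) by blast
  ultimately have "X \<inter> {u..<v} = {u}" using uv(2) by auto
  then show ?thesis using signed_count_diff[of u v X] uv(2) by simp
qed

lemma meets_two_split:
  assumes X: "meets_exactly W 2 X" and uv: "W k \<inter> X = {u, v}" "u < v"
  obtains Y Z where "meets_exactly W 1 Y" "meets_exactly W 1 Z" "u \<in> Y" "v \<in> Z"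
proof -
  \<comment> \<open>The two elements of \<open>X\<close> in a row are consecutive in \<open>X\<close>, so they have opposite parity
    of \<open>signed_count\<close>.\<close>
  define P where "P x \<longleftrightarrow> even (signed_count X x) = even (signed_count X u)" for x
  have "card (W k' \<inter> {x \<in> X. P x}) = 1 \<and> card (W k' \<inter> {x \<in> X. \<not> P x}) = 1" for k'
  proof -
    obtain u' v' where uv': "W k' \<inter> X = {u', v'}" "u' < v'"
      using X card_2_obtain_less unfolding meets_exactly_def by blast
    have alternate: "P v' \<longleftrightarrow> \<not> P u'"
      using signed_count_row_pair[OF uv'] by (auto simp: P_def)
    have "W k' \<inter> {x \<in> X. Q x} = {x \<in> {u', v'}. Q x}" for Q
      using uv'(1) by blast
    moreover have "{x \<in> {u', v'}. P x} = (if P u' then {u'} else {v'})"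
      "{x \<in> {u', v'}. \<not> P x} = (if P u' then {v'} else {u'})"
      using alternate uv'(2) by auto
    ultimately show ?thesis by simp
  qed
  moreover have "u \<in> {x \<in> X. P x}" "v \<in> {x \<in> X. \<not> P x}"
    using uv signed_count_row_pair[OF uv] by (auto simp: P_def)
  ultimately show thesis using that[of "{x \<in> X. P x}" "{x \<in> X. \<not> P x}"]
    by (simp add: meets_exactly_def)
qed

lemma meets_two_imp_meets_one:
  assumes X: "meets_exactly W 2 X" and "u \<in> X"
  obtains Y where "meets_exactly W 1 Y" "u \<in> Y"
proof -
  obtain k where k: "u \<in> W k" "\<forall>j\<in>W k. u \<le> j" using ex_row_starting_at by blast
  obtain v w where vw: "W k \<inter> X = {v, w}" "v < w"
    using X card_2_obtain_less unfolding meets_exactly_def by blast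
  have "u \<in> {v, w}" using k(1) \<open>u \<in> X\<close> vw(1) by blast
  moreover have "u \<le> v" using k(2) vw(1) by blast
  ultimately have "v = u" using vw(2) by auto
  then show thesis using meets_two_split[OF X vw] that by blast
qed

end

definition window :: "real \<Rightarrow> real \<Rightarrow> real \<Rightarrow> real \<Rightarrow> int \<Rightarrow> int set" where
  "window a b c t k =
     {j. 0 \<le> t - a * of_int k + b * of_int j \<and> t - a * of_int k + b * of_int j < c}"

lemma finite_window:
  assumes "0 < b"
  shows "finite (window a b c t k)"
proof -
  have "window a b c t k \<subseteq> {\<lfloor>(a * of_int k - t) / b\<rfloor> .. \<lceil>(a * of_int k - t + c) / b\<rceil>}"
  proof
    fix j assume "j \<in> window a b c t k"
    then have "(a * of_int k - t) / b \<le> of_int j" "of_int j \<le> (a * of_int k - t + c) / b"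
      using assms by (simp_all add: window_def divide_le_eq le_divide_eq mult.commute)
    then show "j \<in> {\<lfloor>(a * of_int k - t) / b\<rfloor> .. \<lceil>(a * of_int k - t + c) / b\<rceil>}"
      by (simp add: floor_le_iff le_ceiling_iff)
  qed
  then show ?thesis by (rule finite_subset) simp
qed

lemma interval_rows_window:
  assumes a: "0 < a" and "a \<le> b" "b \<le> c"
  shows "interval_rows (window a b c t)"
proof
  have b: "0 < b" using assms by linarith
  show "finite (window a b c t k)" for k using finite_window[OF b] .
  show "j \<in> window a b c t k"
    if "i \<in> window a b c t k" "l \<in> window a b c t k" "i \<le> j" "j \<le> l" for i j l k
  proof -
    have "b * of_int i \<le> b * of_int j" "b * of_int j \<le> b * of_int l"
      using that b by (simp_all add: mult_left_mono)
    then show ?thesis using that(1,2) by (simp add: window_def)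
  qed
  show "\<exists>k. i \<in> window a b c t k \<and> (\<forall>j\<in>window a b c t k. i \<le> j)" for i
  proof (intro exI conjI ballI)
    define k where "k = \<lfloor>(t + b * of_int i) / a\<rfloor>"
    have k: "0 \<le> t + b * of_int i - a * of_int k" "t + b * of_int i - a * of_int k < a"
      unfolding k_def by (rule remainder_floor_divide_bounds[OF a])+
    show "i \<in> window a b c t k" using k assms by (simp add: window_def)
    show "i \<le> j" if "j \<in> window a b c t k" for j
    proof (rule ccontr)
      assume "\<not> i \<le> j"
      then have "b * of_int j \<le> b * (of_int i - 1)" using b by (simp add: mult_left_mono)
      then show False using that k assms by (simp add: window_def algebra_simps)
    qed
  qed
  show "\<exists>k. i \<in> window a b c t k \<and> (\<forall>j\<in>window a b c t k. j \<le> i)" for i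
  proof (intro exI conjI ballI)
    define k where "k = \<lfloor>(t + b * of_int i + b - c) / a\<rfloor>"
    have k: "0 \<le> t + b * of_int i + b - c - a * of_int k" "t + b * of_int i + b - c - a * of_int k < a"
      unfolding k_def by (rule remainder_floor_divide_bounds[OF a])+
    show "i \<in> window a b c t k" using k assms by (simp add: window_def)
    show "j \<le> i" if "j \<in> window a b c t k" for j
    proof (rule ccontr)
      assume "\<not> j \<le> i"
      then have "b * (of_int i + 1) \<le> b * of_int j" using b by (simp add: mult_left_mono)
      then show False using that k by (simp add: window_def algebra_simps)
    qed
  qed
qed

lemma meets_exactly_window_shift:
  "meets_exactly (window a b c (t + b * of_int m)) n Y
     \<longleftrightarrow> meets_exactly (window a b c t) n ((\<lambda>j. j + m) ` Y)"
proof -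
  have "window a b c t k \<inter> (\<lambda>j. j + m) ` Y = (\<lambda>j. j + m) ` (window a b c (t + b * of_int m) k \<inter> Y)"
    for k by (force simp: window_def algebra_simps image_iff)
  then show ?thesis by (simp add: meets_exactly_def card_image)
qed

lemma Mmul_eq_card:
  assumes "0 < b" and "\<forall>j. x j \<in> {0, 1}"
  shows "Mmul a b c t x k = real (card (window a b c t k \<inter> {j. x j = 1}))"
proof -
  have "Mmul a b c t x k = (\<Sum>j\<in>window a b c t k. of_bool (x j = 1))"
    unfolding Mmul_def window_def using assms(2) by (intro sum.cong) (auto simp: indicator_def)
  also have "\<dots> = real (card (window a b c t k \<inter> {j. x j = 1}))"
    using finite_window[OF assms(1)] by (simp add: sum_of_bool_eq Int_def)
  finally show ?thesis .
qed

lemma ex_Bb0_Mmul_iff: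
  assumes "0 < b"
  shows "(\<exists>x\<in>Bb0. \<forall>k. Mmul a b c t x k = real n)
    \<longleftrightarrow> (\<exists>Y. 0 \<in> Y \<and> meets_exactly (window a b c t) n Y)"
proof
  assume "\<exists>x\<in>Bb0. \<forall>k. Mmul a b c t x k = real n"
  then obtain x where "x \<in> Bb0" "\<forall>k. Mmul a b c t x k = real n" by blast
  then show "\<exists>Y. 0 \<in> Y \<and> meets_exactly (window a b c t) n Y"
    using Mmul_eq_card[OF assms] by (intro exI[of _ "{j. x j = 1}"]) (auto simp: Bb0_def meets_exactly_def)
next
  assume "\<exists>Y. 0 \<in> Y \<and> meets_exactly (window a b c t) n Y"
  then obtain Y where "0 \<in> Y" "meets_exactly (window a b c t) n Y" by blast
  moreover define x where "x j = (if j \<in> Y then 1 else 0 :: real)" for j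
  ultimately have "x \<in> Bb0" "\<forall>k. Mmul a b c t x k = real n"
    using Mmul_eq_card[OF assms, of x] by (simp_all add: Bb0_def meets_exactly_def)
  then show "\<exists>x\<in>Bb0. \<forall>k. Mmul a b c t x k = real n" by blast
qed

lemma Sset_iff_meets:
  "0 < b \<Longrightarrow> t \<in> Sset a b c \<longleftrightarrow> (\<exists>Y. 0 \<in> Y \<and> meets_exactly (window a b c t) 1 Y)"
  using ex_Bb0_Mmul_iff[of b a c t 1] by (simp add: Sset_def)

lemma Dset_iff_meets:
  "0 < b \<Longrightarrow> t \<in> Dset a b c \<longleftrightarrow> (\<exists>X. 0 \<in> X \<and> meets_exactly (window a b c t) 2 X)"
  using ex_Bb0_Mmul_iff[of b a c t 2] by (simp add: Dset_def)

lemma shifted_Sset_iff_meets: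
  assumes "0 < b"
  shows "t + b * of_int m \<in> Sset a b c \<longleftrightarrow> (\<exists>Z. m \<in> Z \<and> meets_exactly (window a b c t) 1 Z)"
proof -
  have "(\<lambda>j. j + m) ` (\<lambda>j. j - m) ` Z = Z" for Z by (force simp: image_iff)
  then show ?thesis
    unfolding Sset_iff_meets[OF assms] meets_exactly_window_shift
    by (metis (no_types, lifting) add_0 diff_self image_eqI)
qed

lemma Dset_if_shared_row:
  assumes "0 < a" "a \<le> b" "b \<le> c"
    and "t \<in> Sset a b c" "t + b * of_int j \<in> Sset a b c" "j \<noteq> 0"
    and "0 \<in> window a b c t k" "j \<in> window a b c t k"
  shows "t \<in> Dset a b c"
proof -
  interpret interval_rows "window a b c t" by (rule interval_rows_window[OF assms(1-3)])
  have b: "0 < b" using assms by linarith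
  obtain Y where Y: "0 \<in> Y" "meets_exactly (window a b c t) 1 Y"
    using assms(4) Sset_iff_meets[OF b] by blast
  obtain Z where Z: "j \<in> Z" "meets_exactly (window a b c t) 1 Z"
    using assms(5) shifted_Sset_iff_meets[OF b] by blast
  have "Y \<inter> Z = {}" using meets_one_disjoint[OF Y(2) Z(2) Y(1) Z(1)] assms(6-8) by auto
  then have "meets_exactly (window a b c t) 2 (Y \<union> Z)" using meets_one_Un Y Z by blast
  then show ?thesis using Dset_iff_meets[OF b] Y(1) by blast
qed

lemma Dset_subset_Sset:
  assumes "0 < a" "a \<le> b" "b \<le> c"
  shows "Dset a b c \<subseteq> Sset a b c"
proof
  fix t assume "t \<in> Dset a b c"
  interpret interval_rows "window a b c t" by (rule interval_rows_window[OF assms])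
  have b: "0 < b" using assms by linarith
  obtain X where "0 \<in> X" "meets_exactly (window a b c t) 2 X"
    using \<open>t \<in> Dset a b c\<close> Dset_iff_meets[OF b] by blast
  then show "t \<in> Sset a b c"
    using meets_two_imp_meets_one Sset_iff_meets[OF b] by metis
qed

lemma Dset_imp_partner:
  assumes a: "0 < a" and "a \<le> b" "b \<le> c" and "t \<in> Dset a b c"
  defines "r \<equiv> t - a * of_int \<lfloor>t / a\<rfloor>"
  obtains q where "0 < q" "r + b * of_int q < c" "r + b * (of_int q + 1) < c + a"
    "t + b * of_int q \<in> Sset a b c"
proof -
  interpret interval_rows "window a b c t" by (rule interval_rows_window[OF assms(1-3)])
  have b: "0 < b" using assms by linarith
  define k where "k = \<lfloor>t / a\<rfloor>"
  have r: "0 \<le> r" "r < a" unfolding r_def by (rule remainder_floor_divide_bounds[OF a])+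
  have row: "j \<in> window a b c t k \<longleftrightarrow> 0 \<le> r + b * of_int j \<and> r + b * of_int j < c" for j
    by (simp add: window_def r_def k_def)
  have next_row: "j \<in> window a b c t (k + 1) \<longleftrightarrow> 0 \<le> r - a + b * of_int j \<and> r - a + b * of_int j < c"
    for j by (simp add: window_def r_def k_def algebra_simps)
  have row_nonneg: "0 \<le> j" if "j \<in> window a b c t k" for j
  proof (rule ccontr)
    assume "\<not> 0 \<le> j"
    then have "b * of_int j \<le> b * (-1)" using b by (intro mult_left_mono) auto
    then show False using that row r assms(2) by auto
  qed
  obtain X where X: "0 \<in> X" "meets_exactly (window a b c t) 2 X"
    using assms(4) Dset_iff_meets[OF b] by blast
  obtain u q where uq: "window a b c t k \<inter> X = {u, q}" "u < q"
    using X(2) card_2_obtain_less unfolding meets_exactly_def by blast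
  have "0 \<in> window a b c t k" using row r assms by simp
  then have "0 \<in> {u, q}" using X(1) uq(1) by blast
  moreover have "0 \<le> u" using row_nonneg uq(1) by blast
  ultimately have "u = 0" using uq(2) by auto
  with uq have q: "window a b c t k \<inter> X = {0, q}" "0 < q" by auto
  have "r + b * of_int q < c" using q(1) row by blast
  \<comment> \<open>Otherwise row \<open>k + 1\<close> lies in \<open>{1..q}\<close>, hence inside row \<open>k\<close>, and meets \<open>X\<close> only in \<open>q\<close>.\<close>
  moreover have "r + b * (of_int q + 1) < c + a"
  proof (rule ccontr)
    assume far: "\<not> r + b * (of_int q + 1) < c + a"
    have "window a b c t (k + 1) \<inter> X \<subseteq> {q}"
    proof
      fix w assume w: "w \<in> window a b c t (k + 1) \<inter> X"
      then have "0 < b * of_int w" "b * of_int w < b * (of_int q + 1)"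
        using next_row r far by auto
      then have "0 < w" "w \<le> q" using b by (simp_all add: zero_less_mult_iff)
      then have "w \<in> window a b c t k"
        using row_convex[of 0 k q w] q(1) by auto
      then have "w \<in> {0, q}" using w q(1) by blast
      then show "w \<in> {q}" using \<open>0 < w\<close> by auto
    qed
    then have "card (window a b c t (k + 1) \<inter> X) \<le> 1"
      using card_mono[of "{q}"] by fastforce
    then show False using X(2) by (simp add: meets_exactly_def)
  qed
  moreover have "t + b * of_int q \<in> Sset a b c"
    using meets_two_split[OF X(2) q] shifted_Sset_iff_meets[OF b] by metis
  ultimately show thesis using that q(2) by blast
qed

lemma Dset_iff_partner:
  fixes a b c t :: real
  assumes a: "0 < a" and "a \<le> b" "b \<le> c"
  defines "r \<equiv> t - a * of_int \<lfloor>t / a\<rfloor>" and "L \<equiv> \<lfloor>c / b\<rfloor>"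
  shows "t \<in> Dset a b c \<longleftrightarrow> t \<in> Sset a b c \<and>
    ((\<exists>j. 1 \<le> j \<and> j \<le> L - 1 \<and> t + b * of_int j \<in> Sset a b c) \<or>
     r + b * (of_int L + 1) < c + a \<and> t + b * of_int L \<in> Sset a b c)"
    (is "_ \<longleftrightarrow> _ \<and> ?partner")
proof -
  have b: "0 < b" using assms by linarith
  have L: "0 \<le> c - b * of_int L" "c - b * of_int L < b"
    unfolding L_def by (rule remainder_floor_divide_bounds[OF b])+
  have r: "0 \<le> r" "r < a" unfolding r_def by (rule remainder_floor_divide_bounds[OF a])+
  have row: "j \<in> window a b c t \<lfloor>t / a\<rfloor> \<longleftrightarrow> 0 \<le> r + b * of_int j \<and> r + b * of_int j < c" for j
    by (simp add: window_def r_def)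
  have zero_in_row: "0 \<in> window a b c t \<lfloor>t / a\<rfloor>" using row r assms by simp
  show ?thesis
  proof
    assume D: "t \<in> Dset a b c"
    obtain q where q: "0 < q" "r + b * of_int q < c" "r + b * (of_int q + 1) < c + a"
      "t + b * of_int q \<in> Sset a b c"
      using Dset_imp_partner[OF assms(1-3) D] unfolding r_def by blast
    have "b * of_int q < b * (of_int L + 1)" using q(2) r L by (simp add: algebra_simps)
    then have "q \<le> L" using b by simp
    then have ?partner using q by (cases "q = L") auto
    then show "t \<in> Sset a b c \<and> ?partner" using D Dset_subset_Sset[OF assms(1-3)] by blast
  next
    assume S: "t \<in> Sset a b c \<and> ?partner"
    obtain j where j: "1 \<le> j" "j \<in> window a b c t \<lfloor>t / a\<rfloor>" "t + b * of_int j \<in> Sset a b c"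
    proof (cases "\<exists>j. 1 \<le> j \<and> j \<le> L - 1 \<and> t + b * of_int j \<in> Sset a b c")
      case True
      then obtain j where j: "1 \<le> j" "j \<le> L - 1" "t + b * of_int j \<in> Sset a b c" by blast
      have "b * 1 \<le> b * of_int j" "b * of_int j \<le> b * (of_int L - 1)"
        using j(1,2) b by (simp_all add: mult_left_mono)
      then have "j \<in> window a b c t \<lfloor>t / a\<rfloor>"
        using row r L assms(2) by (simp add: algebra_simps)
      then show thesis using that j by blast
    next
      case False
      then have far: "r + b * (of_int L + 1) < c + a" and SL: "t + b * of_int L \<in> Sset a b c"
        using S by auto
      have "0 < b * of_int L" using L assms(3) by linarith
      then have "1 \<le> L" using b by (simp add: zero_less_mult_iff)
      moreover have "L \<in> window a b c t \<lfloor>t / a\<rfloor>"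
        using row r far assms(2) \<open>0 < b * of_int L\<close> by (simp add: algebra_simps)
      ultimately show thesis using that SL by blast
    qed
    then show "t \<in> Dset a b c"
      using Dset_if_shared_row[OF assms(1-3) _ j(3) _ zero_in_row j(2)] S by simp
  qed
qed

lemma mem_shift_set_iff: "t \<in> shift_set A r \<longleftrightarrow> t + r \<in> A"
  by (force simp: shift_set_def image_iff)

lemma mem_plus_aZ_atLeastLessThan:
  assumes a: "0 < a" and "d \<le> a"
  shows "t \<in> plus_aZ {0..<d} a \<longleftrightarrow> t - a * of_int \<lfloor>t / a\<rfloor> < d"
proof
  assume "t \<in> plus_aZ {0..<d} a"
  then obtain x k where t: "t = x + a * of_int k" "0 \<le> x" "x < d" by (auto simp: plus_aZ_def)
  then have "\<lfloor>t / a\<rfloor> = k"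
    using a assms(2) by (simp add: floor_eq_iff field_simps)
  then show "t - a * of_int \<lfloor>t / a\<rfloor> < d" using t by simp
next
  assume "t - a * of_int \<lfloor>t / a\<rfloor> < d"
  moreover have "0 \<le> t - a * of_int \<lfloor>t / a\<rfloor>" by (rule remainder_floor_divide_bounds[OF a])
  ultimately show "t \<in> plus_aZ {0..<d} a"
    unfolding plus_aZ_def by (intro CollectI exI[of _ "t - a * of_int \<lfloor>t / a\<rfloor>"]) auto
qed

lemma mem_UN_shift_set_multiples:
  fixes b :: real
  assumes "0 < b"
  shows "t \<in> (\<Union>lam\<in>{b * of_int j | j::int. b \<le> b * of_int j \<and> b * of_int j \<le> (of_int L - 1) * b}.
      shift_set A lam) \<longleftrightarrow> (\<exists>j. 1 \<le> j \<and> j \<le> L - 1 \<and> t + b * of_int j \<in> A)"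
proof -
  have "b \<le> b * of_int j \<and> b * of_int j \<le> (of_int L - 1) * b \<longleftrightarrow> 1 \<le> j \<and> j \<le> L - 1" for j
    using assms by (simp add: mult.commute[of _ b]) linarith
  then show ?thesis by (auto simp: mem_shift_set_iff)
qed

theorem theorem4p2:
  fixes a b c :: real
  assumes "0 < a" and "a < b" and "b < c"
    and "b - a < c - of_int \<lfloor>c / b\<rfloor> * b"
    and "c - of_int \<lfloor>c / b\<rfloor> * b < a"
  shows "Dset a b c =
     (Sset a b c \<inter> plus_aZ {0..<(c - of_int \<lfloor>c / b\<rfloor> * b) + a - b} a
        \<inter> shift_set (Sset a b c) (of_int \<lfloor>c / b\<rfloor> * b))
     \<union> (Sset a b c \<inter>
        (\<Union>lam\<in>{b * of_int j | j::int. b \<le> b * of_int j \<and> b * of_int j \<le> (of_int \<lfloor>c / b\<rfloor> - 1) * b}.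
           shift_set (Sset a b c) lam))"
proof -
  have b: "0 < b" using assms by linarith
  have "c - of_int \<lfloor>c / b\<rfloor> * b + a - b \<le> a"
    using remainder_floor_divide_bounds(2)[OF b, of c] by (simp add: algebra_simps)
  then have aZ: "t \<in> plus_aZ {0..<c - of_int \<lfloor>c / b\<rfloor> * b + a - b} a \<longleftrightarrow>
      t - a * of_int \<lfloor>t / a\<rfloor> + b * (of_int \<lfloor>c / b\<rfloor> + 1) < c + a" for t
    using mem_plus_aZ_atLeastLessThan[OF assms(1)] by (simp add: algebra_simps)
  have shift: "t \<in> shift_set (Sset a b c) (of_int \<lfloor>c / b\<rfloor> * b) \<longleftrightarrow>
      t + b * of_int \<lfloor>c / b\<rfloor> \<in> Sset a b c" for t
    by (simp add: mem_shift_set_iff mult.commute)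
  show ?thesis
    unfolding set_eq_iff Un_iff Int_iff aZ shift mem_UN_shift_set_multiples[OF b]
      Dset_iff_partner[OF assms(1) less_imp_le[OF assms(2)] less_imp_le[OF assms(3)]]
    by blast
qed

end
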